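(* Let $d\ge0$ and consider the Gaussian broadcast model on $P=\mathbb{Z}_{\ge0}^{d+1}$ in the critical case $\alpha_i=1/i$ for all $i\in\{1,\dots,d+1\}$. There is a constant $K_d>0$ depending only on $d$ such that for every integer $t\ge1$ and every choice of reals $c_u\ge0$ ($u\in L_t$) with $\sum_{u\in L_t}c_u>0$, the random variable $\zeta=\sum_{u\in L_t}c_uX_u$ satisfies $$\frac{\operatorname{Cov}(\zeta,X_0)}{\sqrt{\operatorname{Var}(\zeta)}}\le \frac{K_d}{t^{1/4}}.$$
   Context: Gaussian broadcast model: Let $d\ge 0$ and let $P$ be an infinite graded poset with layers $L_0,L_1,\dots$ ($L_t$ = elements of rank $t$, $L_0$ = minimal elements), in which every element covers at most $d+1$ elements. For $v\in P$ let $\mathfrak p(v)$ be the set of elements covered by $v$. Given $\alpha_1,\dots,\alpha_{d+1}>0$, let $X_0\sim\mathcal N(0,1)$ and, independently, let $W_{u\to v}$ be i.i.d. $\mathcal N(0,1)$ indexed by covering pairs $u\lessdot v$. Set $X_v=X_0$ for $v\in L_0$, and for $v$ of rank $\ge1$ set $X_v=\alpha_{|\mathfrak p(v)|}\sum_{u\in\mathfrak p(v)}(X_u+W_{u\to v})$. Finite model: $P=\mathbb{Z}_{\ge0}^{d+1}$ with $u\le v$ iff $v-u\in\mathbb{Z}_{\ge0}^{d+1}$; $L_t$ is the set of tuples with coordinate sum $t$; $|\mathfrak p(v)|$ equals the number of positive coordinates of $v$. *)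

theory Defs
  imports "HOL-Probability.Probability"
begin

text \<open>Vertices of P = Z_{>=0}^{d+1} are lists of naturals of length d+1.
  A covering pair u < v is encoded as (v, i) with i < length v and v!i > 0;
  then u = v[i := v!i - 1].\<close>

definition layer :: "nat \<Rightarrow> nat \<Rightarrow> nat list set" where
  "layer d t = {v. length v = Suc d \<and> sum_list v = t}"

definition cover_edges :: "nat \<Rightarrow> (nat list \<times> nat) set" where
  "cover_edges d = {(v, i). length v = Suc d \<and> i < length v \<and> 0 < v ! i}"

definition parent_idx :: "nat list \<Rightarrow> nat set" where
  "parent_idx v = {i. i < length v \<and> 0 < v ! i}"

text \<open>Gaussian broadcast in the critical case alpha_k = 1/k.
  G None is X_0, G (Some (v,i)) is the noise W on the edge into v along coordinate i.
  bX G t v is the value X_v for v of rank t.\<close>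

fun bX :: "((nat list \<times> nat) option \<Rightarrow> 'a \<Rightarrow> real) \<Rightarrow> nat \<Rightarrow> nat list \<Rightarrow> 'a \<Rightarrow> real" where
  "bX G 0 v \<omega> = G None \<omega>"
| "bX G (Suc t) v \<omega> =
     (1 / real (card (parent_idx v))) *
     (\<Sum>i\<in>parent_idx v. bX G t (v[i := v ! i - 1]) \<omega> + G (Some (v, i)) \<omega>)"

definition broadcastX :: "((nat list \<times> nat) option \<Rightarrow> 'a \<Rightarrow> real) \<Rightarrow> nat list \<Rightarrow> 'a \<Rightarrow> real" where
  "broadcastX G v = bX G (sum_list v) v"

definition covariance :: "'a measure \<Rightarrow> ('a \<Rightarrow> real) \<Rightarrow> ('a \<Rightarrow> real) \<Rightarrow> real" where
  "covariance M X Y =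
     (\<integral>\<omega>. (X \<omega> - (\<integral>x. X x \<partial>M)) * (Y \<omega> - (\<integral>x. Y x \<partial>M)) \<partial>M)"

definition var :: "'a measure \<Rightarrow> ('a \<Rightarrow> real) \<Rightarrow> real" where
  "var M X = covariance M X X"

end

theory Submission
  imports Defs
begin

text \<open>Unfolding the recursion, \<open>X\<^sub>v = X\<^sub>0 + \<Sum>\<^sub>e p\<^sub>v(e) W\<^sub>e\<close>, where \<open>p\<^sub>v(e)\<close> is the
  probability that the walk from \<open>v\<close> which repeatedly lowers a uniformly chosen positive coordinate
  crosses the edge \<open>e\<close>. Hence \<open>Cov(\<zeta>, X\<^sub>0) = S = \<Sum>\<^sub>u c\<^sub>u\<close> and
  \<open>Var \<zeta> = S\<^sup>2 + \<Sum>\<^sub>e a\<^sub>e\<^sup>2\<close> with \<open>a\<^sub>e = \<Sum>\<^sub>u c\<^sub>u p\<^sub>u(e)\<close>, so it suffices to show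
  \<open>\<Sum>\<^sub>e a\<^sub>e\<^sup>2 \<ge> S\<^sup>2 \<surd>t / K\<close>.

  Restrict the sum to the \<open>(d+1)L\<close> axis edges of rank at most \<open>L \<approx> \<surd>t\<close>. By Cauchy-Schwarz it
  is enough that every walk from layer \<open>t\<close> crosses at least \<open>L / 4^(d+1)\<close> of them in expectation.
  For this compare with the continuous-time walk in which the coordinates decrease by independent
  unit-rate Poisson processes: the probability of sitting, at time \<open>\<theta>\<close>, on an axis at height
  at least \<open>L\<close> is a subsolution of the recursion satisfied by the expected number of crossings
  (a maximum principle), and since a Poisson weight near the mean is \<open>O(1/\<surd>n)\<close>, a suitable
  \<open>\<theta>\<close> makes every factor of that probability at least \<open>1/4\<close>.\<close>

definition poisson_term :: "nat \<Rightarrow> real \<Rightarrow> real" where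
  "poisson_term m x = exp (- x) * x ^ m / fact m"

text \<open>\<open>poisson_cdf n x\<close> is \<open>P(N < n)\<close> (strict) for \<open>N\<close> Poisson with mean \<open>x\<close>.\<close>

definition poisson_cdf :: "nat \<Rightarrow> real \<Rightarrow> real" where
  "poisson_cdf n x = (\<Sum>m<n. poisson_term m x)"

lemma poisson_term_nonneg: "0 \<le> x \<Longrightarrow> 0 \<le> poisson_term m x"
  by (simp add: poisson_term_def)

lemma poisson_cdf_nonneg: "0 \<le> x \<Longrightarrow> 0 \<le> poisson_cdf n x"
  by (simp add: poisson_cdf_def poisson_term_nonneg sum_nonneg)

lemma poisson_cdf_le_1:
  assumes "0 \<le> x" shows "poisson_cdf n x \<le> 1"
proof -
  have "(\<Sum>m<n. x ^ m / fact m) \<le> (\<Sum>m. x ^ m / fact m)"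
    using assms summable_exp_generic[of x] by (intro sum_le_suminf) (auto simp: field_simps)
  also have "\<dots> = exp x" by (simp add: exp_def scaleR_conv_of_real field_simps)
  finally have "exp (- x) * (\<Sum>m<n. x ^ m / fact m) \<le> exp (- x) * exp x"
    by (intro mult_left_mono) auto
  then show ?thesis by (simp add: poisson_cdf_def poisson_term_def sum_distrib_left exp_minus field_simps)
qed

lemma poisson_cdf_mono: "0 \<le> x \<Longrightarrow> m \<le> n \<Longrightarrow> poisson_cdf m x \<le> poisson_cdf n x"
  unfolding poisson_cdf_def by (rule sum_mono2) (auto simp: poisson_term_nonneg)

lemma poisson_cdf_at_0: "poisson_cdf n 0 = (if n = 0 then 0 else 1)"
  by (cases n) (simp_all add: poisson_cdf_def poisson_term_def sum.lessThan_Suc_shift del: sum.lessThan_Suc)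

lemma poisson_cdf_Suc: "poisson_cdf (Suc n) x = poisson_cdf n x + poisson_term n x"
  by (simp add: poisson_cdf_def)

lemma poisson_term_Suc_has_derivative:
  "(poisson_term (Suc m) has_real_derivative poisson_term m x - poisson_term (Suc m) x) (at x)"
proof -
  have pow: "((\<lambda>x. x ^ Suc m) has_real_derivative real (Suc m) * x ^ m) (at x)"
    using DERIV_pow[of "Suc m" x] by simp
  have exp: "((\<lambda>x. exp (- x)) has_real_derivative - exp (- x)) (at x)"
    by (auto intro!: derivative_eq_intros)
  have "((\<lambda>x. exp (- x) * x ^ Suc m) has_real_derivative
      - exp (- x) * x ^ Suc m + exp (- x) * (real (Suc m) * x ^ m)) (at x)"
    using DERIV_mult[OF exp pow] by (simp add: algebra_simps)
  from DERIV_cdivide[OF this, of "fact (Suc m)"]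
  have "(poisson_term (Suc m) has_real_derivative
      (- exp (- x) * x ^ Suc m + exp (- x) * (real (Suc m) * x ^ m)) / fact (Suc m)) (at x)"
    by (simp add: poisson_term_def[abs_def])
  moreover have "(- exp (- x) * x ^ Suc m + exp (- x) * (real (Suc m) * x ^ m)) / fact (Suc m)
      = poisson_term m x - poisson_term (Suc m) x"
    by (simp add: poisson_term_def diff_divide_distrib del: of_nat_Suc)
  ultimately show ?thesis by simp
qed

lemma poisson_cdf_Suc_has_derivative:
  "(poisson_cdf (Suc n) has_real_derivative - poisson_term n x) (at x)"
proof (induction n)
  case 0
  show ?case unfolding poisson_cdf_def poisson_term_def by (auto intro!: derivative_eq_intros)
next
  case (Suc n)
  show ?case
    using DERIV_add[OF Suc poisson_term_Suc_has_derivative[of n x]]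
    by (simp add: poisson_cdf_Suc[abs_def])
qed

lemma isCont_poisson_cdf: "isCont (poisson_cdf n) x"
  unfolding poisson_cdf_def[abs_def] poisson_term_def by (intro continuous_intros) auto

lemma poisson_cdf_tendsto_0: "(poisson_cdf n \<longlongrightarrow> 0) at_top"
proof -
  have "((\<lambda>x::real. (x ^ m / exp x) * inverse (fact m)) \<longlongrightarrow> 0) at_top" for m
    by (rule tendsto_mult_left_zero[OF tendsto_power_div_exp_0])
  then have "((\<lambda>x. \<Sum>m<n. poisson_term m x) \<longlongrightarrow> (\<Sum>m<n. 0)) at_top"
    by (intro tendsto_sum) (simp add: poisson_term_def exp_minus field_simps)
  then show ?thesis by (simp add: poisson_cdf_def[abs_def])
qed

lemma poisson_term_le_mode:
  assumes "0 \<le> x" shows "poisson_term j x \<le> poisson_term j (real j)"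
proof (cases "j = 0 \<or> x = 0")
  case True
  then show ?thesis using assms by (auto simp: poisson_term_def power_0_left)
next
  case False
  then have xp: "0 < x" and jp: "0 < real j" using assms by auto
  have "ln (x / j) \<le> x / j - 1" using xp jp by (intro ln_le_minus_one) auto
  then have "j * ln (x / j) \<le> j * (x / j - 1)" using jp by (intro mult_left_mono) auto
  then have "j * (ln x - ln j) \<le> x - j" using xp jp by (simp add: ln_div right_diff_distrib)
  then have ineq: "- x + j * ln x \<le> - real j + j * ln j" by (simp add: right_diff_distrib)
  have e: "exp (- y) * y ^ j = exp (- y + j * ln y)" if "0 < y" for y :: real
    by (simp only: exp_add exp_of_nat_mult exp_ln[OF that])
  have "exp (- x) * x ^ j \<le> exp (- real j) * real j ^ j"
    unfolding e[OF xp] e[OF jp] using ineq by simp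
  then show ?thesis unfolding poisson_term_def by (simp add: divide_right_mono)
qed

lemma fact_add_le: "fact (j + l) \<le> (fact j :: real) * real (j + l) ^ l"
proof (induction l)
  case (Suc l)
  have "fact (j + Suc l) = real (j + Suc l) * (fact (j + l) :: real)"
    by (simp add: algebra_simps)
  also have "\<dots> \<le> real (j + Suc l) * (fact j * real (j + l) ^ l)"
    using Suc by (intro mult_left_mono) auto
  also have "\<dots> \<le> real (j + Suc l) * (fact j * real (j + Suc l) ^ l)"
    by (intro mult_left_mono power_mono) auto
  finally show ?case by (simp add: algebra_simps)
qed simp

text \<open>Within distance \<open>\<surd>j\<close> of the mode the Poisson weights drop by at most a factor \<open>e\<close>;
  since they sum to at most one, the mode weight is \<open>O(1/\<surd>j)\<close>.\<close>

lemma poisson_term_shift_ge: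
  assumes "1 \<le> j" "l * l \<le> j"
  shows "poisson_term j (real j) / exp 1 \<le> poisson_term (j + l) (real j)"
proof -
  have jp: "0 < real j" using assms by simp
  have "(1 + real l / j) ^ l \<le> exp (real l / j) ^ l"
    by (intro power_mono) (auto simp: exp_ge_add_one_self_aux)
  also have "\<dots> = exp (real l * (real l / j))" by (subst exp_of_nat_mult) simp
  also have "\<dots> \<le> exp 1"
    using assms jp by (simp add: field_simps) (metis of_nat_le_iff of_nat_mult)
  finally have "real j ^ l * (1 + real l / j) ^ l \<le> real j ^ l * exp 1"
    by (intro mult_left_mono) auto
  moreover have "real (j + l) ^ l = real j ^ l * (1 + real l / j) ^ l"
    using jp by (simp add: power_mult_distrib[symmetric] field_simps)
  ultimately have "fact j * real (j + l) ^ l \<le> (fact j :: real) * (real j ^ l * exp 1)"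
    by (intro mult_left_mono) auto
  with fact_add_le[of j l] have "fact (j + l) \<le> (fact j :: real) * (real j ^ l * exp 1)"
    by linarith
  then have "exp (- real j) * real j ^ j * real j ^ l / (fact j * (real j ^ l * exp 1))
      \<le> exp (- real j) * real j ^ j * real j ^ l / fact (j + l)"
    using jp by (intro divide_left_mono mult_pos_pos) auto
  moreover have "exp (- real j) * real j ^ j * real j ^ l / (fact j * (real j ^ l * exp 1))
      = poisson_term j (real j) / exp 1"
    using jp by (simp add: poisson_term_def field_simps)
  ultimately show ?thesis by (simp add: poisson_term_def power_add)
qed
lemma poisson_term_mode_le:
  assumes "1 \<le> j" shows "poisson_term j (real j) \<le> exp 1 / sqrt j"
proof -
  define r where "r = nat \<lfloor>sqrt (real j)\<rfloor>"
  have r1: "real r \<le> sqrt j" unfolding r_def by simp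
  have r2: "sqrt j < real r + 1" unfolding r_def by linarith
  have "real (r * r) \<le> real j"
    using r1 mult_mono[OF r1 r1] by simp
  then have rr: "r * r \<le> j" by linarith
  have "(\<Sum>l\<le>r. poisson_term j (real j) / exp 1) \<le> (\<Sum>l\<le>r. poisson_term (j + l) (real j))"
  proof (intro sum_mono poisson_term_shift_ge[OF assms])
    fix l assume "l \<in> {..r}"
    then have "l * l \<le> r * r" by (intro mult_mono) auto
    then show "l * l \<le> j" using rr by simp
  qed
  also have "\<dots> = (\<Sum>m\<in>(+) j ` {..r}. poisson_term m (real j))"
    by (subst sum.reindex) auto
  also have "\<dots> \<le> poisson_cdf (j + r + 1) (real j)"
    unfolding poisson_cdf_def by (rule sum_mono2) (auto simp: poisson_term_nonneg)
  also have "\<dots> \<le> 1" by (rule poisson_cdf_le_1) simp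
  finally have "poisson_term j (real j) \<le> exp 1 / (real r + 1)"
    by (simp add: field_simps)
  also have "\<dots> \<le> exp 1 / sqrt j"
    using r2 assms by (intro divide_left_mono) auto
  finally show ?thesis .
qed

lemma poisson_term_le:
  assumes "0 \<le> x" "1 \<le> j" shows "poisson_term j x \<le> exp 1 / sqrt j"
  using poisson_term_le_mode[OF assms(1)] poisson_term_mode_le[OF assms(2)] by (rule order_trans)

lemma poisson_cdf_diff_le:
  assumes "0 \<le> x" "1 \<le> m" "m \<le> n"
  shows "poisson_cdf n x - poisson_cdf m x \<le> real (n - m) * (exp 1 / sqrt m)"
proof -
  have "poisson_cdf n x - poisson_cdf m x = (\<Sum>k\<in>{m..<n}. poisson_term k x)"
    using assms(3) unfolding poisson_cdf_def
    by (simp add: sum_diff[symmetric] lessThan_minus_lessThan)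
  also have "\<dots> \<le> (\<Sum>k\<in>{m..<n}. exp 1 / sqrt m)"
    using assms by (intro sum_mono order_trans[OF poisson_term_le] divide_left_mono) auto
  finally show ?thesis by simp
qed

text \<open>An intermediate value argument on \<open>poisson_cdf m - (1 - poisson_cdf n)\<close>.\<close>

lemma poisson_cdf_quartile_time:
  assumes "1 \<le> m" "m \<le> n" and gap: "\<And>x. 0 \<le> x \<Longrightarrow> poisson_cdf n x - poisson_cdf m x \<le> 1/2"
  obtains x where "0 \<le> x" "1/4 \<le> poisson_cdf m x" "1/4 \<le> 1 - poisson_cdf n x"
proof -
  have "\<forall>\<^sub>F x in at_top. poisson_cdf m x < 1/4"
    using poisson_cdf_tendsto_0[of m] by (rule order_tendstoD) simp
  then obtain x0 where x0: "\<And>x. x0 \<le> x \<Longrightarrow> poisson_cdf m x < 1/4"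
    by (auto simp: eventually_at_top_linorder)
  define x1 where "x1 = max x0 0"
  have x1: "0 \<le> x1" "poisson_cdf m x1 < 1/4" using x0 by (auto simp: x1_def)
  define f where "f x = poisson_cdf m x - (1 - poisson_cdf n x)" for x
  have "f x1 \<le> 0" using x1 gap[OF x1(1)] by (simp add: f_def)
  moreover have "0 \<le> f 0" using assms by (simp add: f_def poisson_cdf_at_0)
  moreover have "\<forall>x. 0 \<le> x \<and> x \<le> x1 \<longrightarrow> isCont f x"
    unfolding f_def[abs_def] by (auto intro!: continuous_intros isCont_poisson_cdf)
  ultimately obtain x where "0 \<le> x" "f x = 0"
    using IVT2[of f x1 0 0] x1 by auto
  with gap[of x] show ?thesis by (intro that) (auto simp: f_def)
qed

lemma poisson_window_time:
  assumes "1 \<le> L" "36 * L\<^sup>2 \<le> Suc n"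
  obtains x where "0 \<le> x" "1/4 \<le> poisson_cdf (Suc n) x" "1/4 \<le> 1 - poisson_cdf (n + L) x"
proof (rule poisson_cdf_quartile_time)
  have "real (36 * L\<^sup>2) \<le> real (Suc n)" using assms(2) by (simp only: of_nat_le_iff)
  then have "(6 * real L)\<^sup>2 \<le> real (Suc n)" by (simp add: power_mult_distrib)
  then have six: "6 * real L \<le> sqrt (Suc n)" by (simp add: real_le_rsqrt)
  fix x :: real assume "0 \<le> x"
  then have "poisson_cdf (n + L) x - poisson_cdf (Suc n) x
      \<le> real (n + L - Suc n) * (exp 1 / sqrt (Suc n))"
    using assms by (intro poisson_cdf_diff_le) auto
  also have "\<dots> \<le> real L * (3 / (6 * real L))"
    using assms six exp_le by (intro mult_mono frac_le) auto
  finally show "poisson_cdf (n + L) x - poisson_cdf (Suc n) x \<le> 1/2"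
    using assms by simp
qed (use assms in auto)

lemma DERIV_nonpos_integrating_factor:
  fixes \<phi> \<phi>' :: "real \<Rightarrow> real"
  assumes deriv: "\<And>x. (\<phi> has_real_derivative \<phi>' x) (at x)"
    and ineq: "\<And>x. 0 \<le> x \<Longrightarrow> \<phi>' x + k * \<phi> x \<le> 0"
    and "\<phi> 0 \<le> 0" "0 \<le> \<theta>"
  shows "\<phi> \<theta> \<le> 0"
proof -
  define \<psi> where "\<psi> x = exp (k * x) * \<phi> x" for x
  have "(\<psi> has_real_derivative exp (k * x) * (\<phi>' x + k * \<phi> x)) (at x)" for x
  proof -
    have "((\<lambda>x. exp (k * x)) has_real_derivative exp (k * x) * k) (at x)"
      by (auto intro!: derivative_eq_intros)
    from DERIV_mult[OF this deriv] show ?thesis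
      unfolding \<psi>_def[abs_def] by (simp add: algebra_simps)
  qed
  moreover have "exp (k * x) * (\<phi>' x + k * \<phi> x) \<le> 0" if "0 \<le> x" for x
    using ineq[OF that] by (simp add: mult_nonneg_nonpos)
  ultimately have "\<psi> \<theta> \<le> \<psi> 0"
    using DERIV_nonpos_imp_nonincreasing[of 0 \<theta> \<psi>] \<open>0 \<le> \<theta>\<close> by blast
  with \<open>\<phi> 0 \<le> 0\<close> have "exp (k * \<theta>) * \<phi> \<theta> \<le> 0" by (simp add: \<psi>_def)
  then show ?thesis by (simp add: mult_le_0_iff)
qed

context prob_space
begin

lemma covariance_var_orthonormal_sum:
  assumes "finite J" "j0 \<in> J"
    and int: "\<And>j. j \<in> J \<Longrightarrow> integrable M (X j)"
    and mean: "\<And>j. j \<in> J \<Longrightarrow> (\<integral>\<omega>. X j \<omega> \<partial>M) = 0"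
    and int2: "\<And>j k. j \<in> J \<Longrightarrow> k \<in> J \<Longrightarrow> integrable M (\<lambda>\<omega>. X j \<omega> * X k \<omega>)"
    and orth: "\<And>j k. j \<in> J \<Longrightarrow> k \<in> J \<Longrightarrow> (\<integral>\<omega>. X j \<omega> * X k \<omega> \<partial>M) = of_bool (j = k)"
  shows "covariance M (\<lambda>\<omega>. \<Sum>j\<in>J. b j * X j \<omega>) (X j0) = b j0"
    and "var M (\<lambda>\<omega>. \<Sum>j\<in>J. b j * X j \<omega>) = (\<Sum>j\<in>J. (b j)\<^sup>2)"
proof -
  define Y where "Y \<omega> = (\<Sum>j\<in>J. b j * X j \<omega>)" for \<omega>
  have mean_Y: "(\<integral>\<omega>. Y \<omega> \<partial>M) = 0"
    using int mean by (simp add: Y_def)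
  have int_YX: "integrable M (\<lambda>\<omega>. Y \<omega> * X k \<omega>)" if "k \<in> J" for k
    using int2 that by (simp add: Y_def sum_distrib_right mult.assoc)
  have cov_YX: "(\<integral>\<omega>. Y \<omega> * X k \<omega> \<partial>M) = b k" if "k \<in> J" for k
    using int2 orth that \<open>finite J\<close> by (simp add: Y_def sum_distrib_right mult.assoc)
  show "covariance M Y (X j0) = b j0"
    using mean_Y cov_YX \<open>j0 \<in> J\<close> mean by (simp add: covariance_def)
  have "Y \<omega> * Y \<omega> = (\<Sum>k\<in>J. b k * (Y \<omega> * X k \<omega>))" for \<omega>
    by (subst (2) Y_def) (simp add: sum_distrib_left ac_simps)
  then have "(\<integral>\<omega>. Y \<omega> * Y \<omega> \<partial>M) = (\<Sum>k\<in>J. b k * b k)"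
    using int_YX cov_YX by simp
  then show "var M Y = (\<Sum>j\<in>J. (b j)\<^sup>2)"
    using mean_Y by (simp add: var_def covariance_def power2_eq_square)
qed

lemma std_normal_integrable:
  assumes "distributed M lborel X std_normal_density"
  shows "integrable M X" "integrable M (\<lambda>\<omega>. X \<omega> * X \<omega>)"
  using distributed_integrable[OF assms, of "\<lambda>x. x"] distributed_integrable[OF assms, of "\<lambda>x. x\<^sup>2"]
    integrable_std_normal_moment[of 1] integrable_std_normal_moment[of 2]
  by (simp_all add: power2_eq_square)

lemma indep_std_normal_orthonormal:
  assumes ind: "indep_vars (\<lambda>_. borel) G I"
    and nd: "\<forall>j\<in>I. distributed M lborel (G j) std_normal_density" and "j \<in> I" "k \<in> I"
  shows "integrable M (\<lambda>\<omega>. G j \<omega> * G k \<omega>)" "(\<integral>\<omega>. G j \<omega> * G k \<omega> \<partial>M) = of_bool (j = k)"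
proof -
  have "integrable M (\<lambda>\<omega>. G j \<omega> * G k \<omega>) \<and> (\<integral>\<omega>. G j \<omega> * G k \<omega> \<partial>M) = of_bool (j = k)"
  proof (cases "j = k")
    case True
    then show ?thesis
      using nd assms std_normal_integrable standard_normal_distributed_expectation
        standard_normal_distributed_variance[of "G k"]
      by (simp add: power2_eq_square)
  next
    case False
    have "indep_vars (\<lambda>_. borel) G (insert j {k})"
      by (rule indep_vars_subset[OF ind]) (use assms in auto)
    then have "indep_var borel (G j) borel (\<lambda>\<omega>. \<Sum>i\<in>{k}. G i \<omega>)"
      by (intro indep_vars_sum) (use False in auto)
    then have "indep_var borel (G j) borel (G k)" by simp
    then show ?thesis
      using nd assms std_normal_integrable standard_normal_distributed_expectation False
      by (simp add: indep_var_integrable indep_var_lebesgue_integral)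
  qed
  then show "integrable M (\<lambda>\<omega>. G j \<omega> * G k \<omega>)" "(\<integral>\<omega>. G j \<omega> * G k \<omega> \<partial>M) = of_bool (j = k)"
    by auto
qed

lemma covariance_var_std_normal_sum:
  assumes ind: "indep_vars (\<lambda>_. borel) G I"
    and nd: "\<forall>j\<in>I. distributed M lborel (G j) std_normal_density"
    and "finite J" "J \<subseteq> I" "j0 \<in> J"
  shows "covariance M (\<lambda>\<omega>. \<Sum>j\<in>J. b j * G j \<omega>) (G j0) = b j0"
    and "var M (\<lambda>\<omega>. \<Sum>j\<in>J. b j * G j \<omega>) = (\<Sum>j\<in>J. (b j)\<^sup>2)"
  using assms indep_std_normal_orthonormal[OF ind nd] std_normal_integrable
    standard_normal_distributed_expectation
  by (intro covariance_var_orthonormal_sum; auto simp: subset_iff)+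

end

fun crossing_prob :: "nat \<Rightarrow> nat list \<Rightarrow> nat list \<times> nat \<Rightarrow> real" where
  "crossing_prob 0 v e = 0"
| "crossing_prob (Suc t) v e = (1 / real (card (parent_idx v))) *
     (\<Sum>i\<in>parent_idx v. crossing_prob t (v[i := v ! i - 1]) e + of_bool (e = (v, i)))"

definition edges_upto :: "nat \<Rightarrow> nat \<Rightarrow> (nat list \<times> nat) set" where
  "edges_upto d t = {e \<in> cover_edges d. sum_list (fst e) \<le> t}"

lemma finite_parent_idx [simp]: "finite (parent_idx v)"
  unfolding parent_idx_def by auto

lemma parent_idx_subset: "parent_idx v \<subseteq> {..<length v}"
  unfolding parent_idx_def by auto

lemma sum_list_decrement:
  assumes "i \<in> parent_idx v"
  shows "sum_list (v[i := v ! i - 1]) = sum_list v - 1"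
proof -
  have i: "i < length v" "0 < v ! i" using assms by (auto simp: parent_idx_def)
  then have "v ! i \<le> sum_list v" by (simp add: elem_le_sum_list)
  then show ?thesis using i by (simp add: sum_list_update)
qed

lemma card_parent_idx_pos:
  assumes "0 < sum_list v" shows "0 < card (parent_idx v)"
proof -
  obtain x where "x \<in> set v" "x \<noteq> 0"
    using assms by (metis sum_list_eq_0_iff bot_nat_0.not_eq_extremum)
  then have "parent_idx v \<noteq> {}" by (auto simp: parent_idx_def in_set_conv_nth)
  then show ?thesis by (simp add: card_gt_0_iff)
qed

lemma crossing_prob_nonneg: "0 \<le> crossing_prob t v e"
  by (induction t arbitrary: v) (auto intro!: sum_nonneg divide_nonneg_nonneg)

lemma finite_lists_sum_le: "finite {v :: nat list. length v = n \<and> sum_list v \<le> t}"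
  by (rule finite_subset[OF _ finite_lists_length_eq[of "{..t}" n]])
    (auto dest: member_le_sum_list)

lemma finite_edges_upto [simp]: "finite (edges_upto d t)"
  by (rule finite_subset[of _ "{v. length v = Suc d \<and> sum_list v \<le> t} \<times> {..<Suc d}"])
    (auto simp: edges_upto_def cover_edges_def finite_lists_sum_le)

lemma finite_layer [simp]: "finite (layer d t)"
  by (rule finite_subset[OF _ finite_lists_sum_le[of "Suc d" t]]) (auto simp: layer_def)

lemma bX_eq_linear_combination:
  assumes "finite E" "edges_upto d t \<subseteq> E" "length v = Suc d" "sum_list v = t"
  shows "bX G t v \<omega> = G None \<omega> + (\<Sum>e\<in>E. crossing_prob t v e * G (Some e) \<omega>)"
  using assms(2-)
proof (induction t arbitrary: v)
  case (Suc t)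
  define P where "P = parent_idx v"
  define f where "f i e = crossing_prob t (v[i := v ! i - 1]) e + of_bool (e = (v, i))" for i e
  have k: "0 < card P" using card_parent_idx_pos[of v] Suc.prems by (simp add: P_def)
  have "bX G t (v[i := v ! i - 1]) \<omega> + G (Some (v, i)) \<omega>
      = G None \<omega> + (\<Sum>e\<in>E. f i e * G (Some e) \<omega>)" if i: "i \<in> P" for i
  proof -
    have "(v, i) \<in> E"
      using i Suc.prems by (auto simp: P_def edges_upto_def cover_edges_def parent_idx_def)
    then have "E \<inter> {e. e = (v, i)} = {(v, i)}" by auto
    moreover have "edges_upto d t \<subseteq> E"
      using Suc.prems(1) by (auto simp: edges_upto_def)
    ultimately show ?thesis
      using Suc.IH[of "v[i := v ! i - 1]"] Suc.prems sum_list_decrement[of i v] i assms(1)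
      by (simp add: P_def f_def distrib_right sum.distrib)
  qed
  then have "bX G (Suc t) v \<omega> = (1 / card P) * (\<Sum>i\<in>P. G None \<omega> + (\<Sum>e\<in>E. f i e * G (Some e) \<omega>))"
    by (simp add: P_def)
  also have "\<dots> = G None \<omega> + (\<Sum>e\<in>E. ((1 / card P) * (\<Sum>i\<in>P. f i e)) * G (Some e) \<omega>)"
    using k by (simp add: sum.distrib sum.swap[of _ P] sum_distrib_left sum_distrib_right field_simps)
  finally show ?case by (simp add: P_def f_def)
qed simp

definition axis_vertex :: "nat \<Rightarrow> nat \<Rightarrow> nat \<Rightarrow> nat list" where
  "axis_vertex d j s = (replicate (Suc d) 0)[j := s]"

definition axis_edges :: "nat \<Rightarrow> nat \<Rightarrow> (nat list \<times> nat) set" where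
  "axis_edges d L = (\<lambda>(j, s). (axis_vertex d j s, j)) ` ({..d} \<times> {1..L})"

definition axis_crossings :: "nat \<Rightarrow> nat \<Rightarrow> nat \<Rightarrow> nat list \<Rightarrow> real" where
  "axis_crossings d L t v = (\<Sum>e\<in>axis_edges d L. crossing_prob t v e)"

lemma finite_axis_edges [simp]: "finite (axis_edges d L)"
  by (simp add: axis_edges_def)

lemma card_axis_edges_le: "card (axis_edges d L) \<le> Suc d * L"
  unfolding axis_edges_def
  by (rule order_trans[OF card_image_le]) (simp_all add: card_cartesian_product)

lemma length_axis_vertex [simp]: "length (axis_vertex d j s) = Suc d"
  by (simp add: axis_vertex_def del: replicate_Suc)

lemma nth_axis_vertex: "j \<le> d \<Longrightarrow> l \<le> d \<Longrightarrow> axis_vertex d j s ! l = (if l = j then s else 0)"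
  by (simp add: axis_vertex_def nth_list_update del: replicate_Suc)

lemma sum_list_axis_vertex: "j \<le> d \<Longrightarrow> sum_list (axis_vertex d j s) = s"
  by (simp add: axis_vertex_def sum_list_update del: replicate_Suc)

lemma parent_idx_axis_vertex: "j \<le> d \<Longrightarrow> 0 < s \<Longrightarrow> parent_idx (axis_vertex d j s) = {j}"
  by (auto simp: parent_idx_def nth_axis_vertex split: if_splits)

lemma axis_vertex_update: "(axis_vertex d j s)[j := s'] = axis_vertex d j s'"
  by (simp add: axis_vertex_def del: replicate_Suc)

lemma axis_vertex_inj: "j \<le> d \<Longrightarrow> axis_vertex d j s = axis_vertex d j s' \<Longrightarrow> s = s'"
  by (metis nth_axis_vertex order_refl)

lemma mem_axis_edges:
  "(w, j) \<in> axis_edges d L \<longleftrightarrow> j \<le> d \<and> (\<exists>s. 1 \<le> s \<and> s \<le> L \<and> w = axis_vertex d j s)"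
  unfolding axis_edges_def by auto

lemma axis_edges_subset_edges_upto: "L \<le> t \<Longrightarrow> axis_edges d L \<subseteq> edges_upto d t"
  by (auto simp: mem_axis_edges edges_upto_def cover_edges_def sum_list_axis_vertex nth_axis_vertex)

lemma axis_crossings_nonneg: "0 \<le> axis_crossings d L t v"
  by (simp add: axis_crossings_def sum_nonneg crossing_prob_nonneg)

lemma axis_crossings_Suc:
  "axis_crossings d L (Suc t) v = (1 / real (card (parent_idx v))) *
     (\<Sum>i\<in>parent_idx v. axis_crossings d L t (v[i := v ! i - 1]) + of_bool ((v, i) \<in> axis_edges d L))"
proof -
  have delta: "(\<Sum>e\<in>axis_edges d L. of_bool (e = (v, i))) = (of_bool ((v, i) \<in> axis_edges d L) :: real)"
    for i unfolding of_bool_def by (simp add: sum.delta')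
  have "axis_crossings d L (Suc t) v = (1 / real (card (parent_idx v))) *
     (\<Sum>e\<in>axis_edges d L. \<Sum>i\<in>parent_idx v. crossing_prob t (v[i := v ! i - 1]) e + of_bool (e = (v, i)))"
    unfolding axis_crossings_def crossing_prob.simps by (rule sum_distrib_left[symmetric])
  also have "\<dots> = (1 / real (card (parent_idx v))) *
     (\<Sum>i\<in>parent_idx v. \<Sum>e\<in>axis_edges d L. crossing_prob t (v[i := v ! i - 1]) e + of_bool (e = (v, i)))"
    by (subst sum.swap) (rule refl)
  finally show ?thesis by (simp only: sum.distrib delta axis_crossings_def)
qed

lemma axis_crossings_axis_vertex:
  "j \<le> d \<Longrightarrow> axis_crossings d L s (axis_vertex d j s) = real (min s L)"
proof (induction s)
  case (Suc s)
  have "(axis_vertex d j (Suc s), j) \<in> axis_edges d L \<longleftrightarrow> Suc s \<le> L"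
    using Suc.prems axis_vertex_inj[OF Suc.prems] by (auto simp: mem_axis_edges)
  then show ?case
    using Suc by (simp add: axis_crossings_Suc parent_idx_axis_vertex nth_axis_vertex axis_vertex_update)
qed (simp add: axis_crossings_def)

lemma axis_crossings_harmonic:
  assumes "L \<le> t" "sum_list v = Suc t"
  shows "axis_crossings d L (Suc t) v = (1 / real (card (parent_idx v))) *
     (\<Sum>i\<in>parent_idx v. axis_crossings d L t (v[i := v ! i - 1]))"
proof -
  have "(v, i) \<notin> axis_edges d L" for i
    using assms by (auto simp: mem_axis_edges sum_list_axis_vertex)
  then show ?thesis by (simp add: axis_crossings_Suc)
qed

lemma eq_axis_vertex:
  assumes "length v = Suc d" "i \<le> d" "sum_list v \<le> v ! i"
  shows "v = axis_vertex d i (sum_list v)"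
proof (rule nth_equalityI)
  fix l assume l: "l < length v"
  have sum: "sum_list v = (\<Sum>m<Suc d. v ! m)"
    using assms(1) by (simp add: sum_list_sum_nth atLeast0LessThan)
  show "v ! l = axis_vertex d i (sum_list v) ! l"
  proof (cases "l = i")
    case True
    then show ?thesis using assms l elem_le_sum_list[of i v] by (simp add: nth_axis_vertex)
  next
    case False
    have "v ! i + v ! l = (\<Sum>m\<in>{i, l}. v ! m)" using False by simp
    also have "\<dots> \<le> (\<Sum>m<Suc d. v ! m)" using l assms by (intro sum_mono2) auto
    finally show ?thesis using False l assms sum by (simp add: nth_axis_vertex)
  qed
qed (use assms in simp)

lemma has_derivative_prod_coordinates:
  fixes f :: "nat \<Rightarrow> nat \<Rightarrow> real \<Rightarrow> real"
  assumes deriv: "\<And>j x. ((\<lambda>\<theta>. f j x \<theta>) has_real_derivative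
      (if x = 0 then 0 else f j (x - 1) \<theta> - f j x \<theta>)) (at \<theta>)"
    and len: "length v = Suc d"
  shows "((\<lambda>\<theta>. \<Prod>j<Suc d. f j (v ! j) \<theta>) has_real_derivative
      (\<Sum>i\<in>parent_idx v. (\<Prod>j<Suc d. f j (v[i := v ! i - 1] ! j) \<theta>) - (\<Prod>j<Suc d. f j (v ! j) \<theta>))) (at \<theta>)"
proof -
  define A where "A = {..<Suc d}"
  define D where "D j = (if v ! j = 0 then 0 else f j (v ! j - 1) \<theta> - f j (v ! j) \<theta>)" for j
  define R where "R i = (\<Prod>j\<in>A-{i}. f j (v ! j) \<theta>)" for i
  have "((\<lambda>\<theta>. \<Prod>j\<in>A. f j (v ! j) \<theta>) has_real_derivative (\<Sum>i\<in>A. D i * R i)) (at \<theta>)"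
    unfolding R_def D_def by (rule has_field_derivative_prod) (rule deriv)
  moreover have P: "parent_idx v \<subseteq> A" using parent_idx_subset[of v] len by (simp add: A_def)
  have "(\<Sum>i\<in>A. D i * R i) = (\<Sum>i\<in>parent_idx v. D i * R i)"
    using P by (intro sum.mono_neutral_right) (auto simp: A_def D_def parent_idx_def len)
  also have "\<dots> = (\<Sum>i\<in>parent_idx v. (\<Prod>j\<in>A. f j (v[i := v ! i - 1] ! j) \<theta>) - (\<Prod>j\<in>A. f j (v ! j) \<theta>))"
  proof (rule sum.cong[OF refl])
    fix i assume i: "i \<in> parent_idx v"
    then have iA: "i \<in> A" and "v ! i \<noteq> 0" "i < length v" using P by (auto simp: parent_idx_def)
    have "(\<Prod>j\<in>A. f j (v[i := v ! i - 1] ! j) \<theta>) = f i (v ! i - 1) \<theta> * (\<Prod>j\<in>A-{i}. f j (v[i := v ! i - 1] ! j) \<theta>)"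
      using iA \<open>i < length v\<close> by (simp add: A_def prod.remove del: prod.lessThan_Suc)
    also have "(\<Prod>j\<in>A-{i}. f j (v[i := v ! i - 1] ! j) \<theta>) = R i"
      unfolding R_def by (rule prod.cong) auto
    finally have "(\<Prod>j\<in>A. f j (v[i := v ! i - 1] ! j) \<theta>) = f i (v ! i - 1) \<theta> * R i" .
    moreover have "(\<Prod>j\<in>A. f j (v ! j) \<theta>) = f i (v ! i) \<theta> * R i"
      using iA by (simp add: A_def R_def prod.remove del: prod.lessThan_Suc)
    ultimately show "D i * R i = (\<Prod>j\<in>A. f j (v[i := v ! i - 1] ! j) \<theta>) - (\<Prod>j\<in>A. f j (v ! j) \<theta>)"
      using \<open>v ! i \<noteq> 0\<close> by (simp add: D_def algebra_simps)
  qed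
  ultimately show ?thesis by (simp add: A_def)
qed

definition stay_prob :: "nat \<Rightarrow> nat \<Rightarrow> real \<Rightarrow> real" where
  "stay_prob L x \<theta> = (if x < L then 0 else poisson_cdf (Suc (x - L)) \<theta>)"

definition hit_prob :: "nat \<Rightarrow> real \<Rightarrow> real" where
  "hit_prob x \<theta> = 1 - poisson_cdf x \<theta>"

definition axis_factor :: "nat \<Rightarrow> nat \<Rightarrow> nat \<Rightarrow> nat \<Rightarrow> real \<Rightarrow> real" where
  "axis_factor i L j x \<theta> = (if j = i then stay_prob L x \<theta> else hit_prob x \<theta>)"

text \<open>Let the coordinates of \<open>v\<close> decrease by independent unit-rate Poisson processes, stopped at 0.
  Then \<open>axis_event_prob d i L v \<theta>\<close> is the probability that at time \<open>\<theta>\<close> every coordinate other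
  than the \<open>i\<close>-th has reached 0 while the \<open>i\<close>-th is still at least \<open>L\<close>; from such a state the walk
  crosses \<open>L\<close> of the \<^const>\<open>axis_edges\<close>.\<close>

definition axis_event_prob :: "nat \<Rightarrow> nat \<Rightarrow> nat \<Rightarrow> nat list \<Rightarrow> real \<Rightarrow> real" where
  "axis_event_prob d i L v \<theta> = (\<Prod>j<Suc d. axis_factor i L j (v ! j) \<theta>)"

lemma stay_prob_has_derivative:
  assumes "1 \<le> L"
  shows "((\<lambda>\<theta>. stay_prob L x \<theta>) has_real_derivative
     (if x = 0 then 0 else stay_prob L (x - 1) \<theta> - stay_prob L x \<theta>)) (at \<theta>)"
proof (cases "x < L")
  case True
  then show ?thesis by (auto simp: stay_prob_def)
next
  case False
  then have "x - L = Suc (x - 1 - L) \<or> x = L" by auto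
  then have "stay_prob L (x - 1) \<theta> - stay_prob L x \<theta> = - poisson_term (x - L) \<theta>"
    using False assms by (auto simp: stay_prob_def poisson_cdf_Suc poisson_cdf_def)
  then show ?thesis
    using False assms poisson_cdf_Suc_has_derivative[of "x - L" \<theta>] by (simp add: stay_prob_def)
qed

lemma hit_prob_has_derivative:
  "((\<lambda>\<theta>. hit_prob x \<theta>) has_real_derivative
     (if x = 0 then 0 else hit_prob (x - 1) \<theta> - hit_prob x \<theta>)) (at \<theta>)"
proof (cases x)
  case (Suc m)
  have "((\<lambda>\<theta>. 1 - poisson_cdf x \<theta>) has_real_derivative 0 - (- poisson_term m \<theta>)) (at \<theta>)"
    using Suc poisson_cdf_Suc_has_derivative[of m \<theta>] by (auto intro!: derivative_eq_intros)
  then show ?thesis using Suc by (simp add: hit_prob_def poisson_cdf_Suc)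
qed (simp add: hit_prob_def poisson_cdf_def)

lemma axis_event_prob_has_derivative:
  assumes "1 \<le> L" "length v = Suc d"
  shows "((\<lambda>\<theta>. axis_event_prob d i L v \<theta>) has_real_derivative
     (\<Sum>j\<in>parent_idx v. axis_event_prob d i L (v[j := v ! j - 1]) \<theta> - axis_event_prob d i L v \<theta>)) (at \<theta>)"
  unfolding axis_event_prob_def
proof (rule has_derivative_prod_coordinates[OF _ assms(2)])
  fix j
  show "((\<lambda>\<theta>. axis_factor i L j x \<theta>) has_real_derivative
      (if x = 0 then 0 else axis_factor i L j (x - 1) \<theta> - axis_factor i L j x \<theta>)) (at \<theta>)" for x
  proof (cases "j = i")
    case True
    then have "axis_factor i L j = stay_prob L" by (simp add: fun_eq_iff axis_factor_def)
    then show ?thesis by (simp only: stay_prob_has_derivative[OF assms(1)])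
  next
    case False
    then have "axis_factor i L j = hit_prob" by (simp add: fun_eq_iff axis_factor_def)
    then show ?thesis by (simp only: hit_prob_has_derivative)
  qed
qed

lemma axis_factor_bounds:
  assumes "0 \<le> \<theta>" shows "0 \<le> axis_factor i L j x \<theta>" "axis_factor i L j x \<theta> \<le> 1"
  using poisson_cdf_nonneg[OF assms] poisson_cdf_le_1[OF assms]
  by (auto simp: axis_factor_def stay_prob_def hit_prob_def)

lemma axis_event_prob_bounds:
  assumes "0 \<le> \<theta>" shows "0 \<le> axis_event_prob d i L v \<theta>" "axis_event_prob d i L v \<theta> \<le> 1"
  unfolding axis_event_prob_def using axis_factor_bounds[OF assms]
  by (auto intro!: prod_nonneg prod_le_1 simp del: prod.lessThan_Suc)

lemma axis_event_prob_eq_0: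
  assumes "i \<le> d" "v ! i < L" shows "axis_event_prob d i L v \<theta> = 0"
  using assms unfolding axis_event_prob_def
  by (intro prod_zero bexI[of _ i]) (auto simp: axis_factor_def stay_prob_def)

lemma axis_event_prob_at_0:
  assumes "length v = Suc d" "i \<le> d" "axis_event_prob d i L v 0 \<noteq> 0"
  shows "v = axis_vertex d i (sum_list v) \<and> L \<le> sum_list v"
proof -
  have "\<forall>j<Suc d. axis_factor i L j (v ! j) 0 \<noteq> 0"
    using assms(3) by (auto simp: axis_event_prob_def prod_zero_iff simp del: prod.lessThan_Suc)
  then have Li: "L \<le> v ! i" and others: "\<forall>j<Suc d. j \<noteq> i \<longrightarrow> v ! j = 0"
    using assms(2) by (auto simp: axis_factor_def stay_prob_def hit_prob_def poisson_cdf_at_0 split: if_splits)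
  have "sum_list v = (\<Sum>j<Suc d. v ! j)"
    using assms(1) by (simp add: sum_list_sum_nth atLeast0LessThan)
  also have "\<dots> = (\<Sum>j\<in>{i}. v ! j)" using others assms(2) by (intro sum.mono_neutral_right) auto
  finally show ?thesis using eq_axis_vertex[OF assms(1,2)] Li by simp
qed

lemma axis_event_prob_le_axis_crossings_axis_vertex:
  assumes "i \<le> d" "L \<le> s" "0 \<le> \<theta>"
  shows "real L * axis_event_prob d i L (axis_vertex d i s) \<theta> \<le> axis_crossings d L s (axis_vertex d i s)"
  using axis_crossings_axis_vertex[OF assms(1)] axis_event_prob_bounds[OF assms(3)] assms(2)
  by (simp add: mult_left_le)

text \<open>The induction on the level is a maximum principle: \<open>L\<close> times the axis event probability is a
  subsolution of the backward equation whose harmonic counterpart is \<^const>\<open>axis_crossings\<close>.\<close>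

lemma axis_event_prob_le_axis_crossings:
  assumes L: "1 \<le> L" and i: "i \<le> d"
  shows "length v = Suc d \<Longrightarrow> sum_list v = L + n \<Longrightarrow> 0 \<le> \<theta> \<Longrightarrow>
    real L * axis_event_prob d i L v \<theta> \<le> axis_crossings d L (L + n) v"
proof (induction n arbitrary: v \<theta>)
  case 0
  show ?case
  proof (cases "v ! i < L")
    case True
    then show ?thesis using axis_event_prob_eq_0[OF i] axis_crossings_nonneg by simp
  next
    case False
    then have "v = axis_vertex d i (L + 0)" using 0 i eq_axis_vertex by fastforce
    then show ?thesis using axis_event_prob_le_axis_crossings_axis_vertex[OF i _ "0.prems"(3)] by simp
  qed
next
  case (Suc n)
  define P where "P = parent_idx v"
  define k where "k = real (card P)"
  define T where "T = axis_crossings d L (L + Suc n) v"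
  define F where "F = axis_event_prob d i L"
  have "0 < k" using card_parent_idx_pos[of v] Suc.prems by (simp add: k_def P_def)
  then have harmonic: "k * T = (\<Sum>j\<in>P. axis_crossings d L (L + n) (v[j := v ! j - 1]))"
    using axis_crossings_harmonic[of L "L + n" v d] Suc.prems by (simp add: T_def P_def k_def)
  have "real L * F v \<theta> - T \<le> 0"
  proof (rule DERIV_nonpos_integrating_factor[where \<phi> = "\<lambda>x. real L * F v x - T" and k = k])
    show "((\<lambda>x. real L * F v x - T) has_real_derivative
        real L * (\<Sum>j\<in>P. F (v[j := v ! j - 1]) x - F v x)) (at x)" for x
      using axis_event_prob_has_derivative[OF L Suc.prems(1), of i x]
      by (auto intro!: derivative_eq_intros simp: F_def P_def)
    show "real L * (\<Sum>j\<in>P. F (v[j := v ! j - 1]) x - F v x) + k * (real L * F v x - T) \<le> 0"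
      if "0 \<le> x" for x
    proof -
      have "real L * (\<Sum>j\<in>P. F (v[j := v ! j - 1]) x) \<le> k * T"
        unfolding harmonic sum_distrib_left F_def
        using Suc.prems sum_list_decrement that by (intro sum_mono Suc.IH) (auto simp: P_def)
      then show ?thesis by (simp add: sum_subtractf k_def algebra_simps)
    qed
    show "real L * F v 0 - T \<le> 0"
    proof (cases "F v 0 = 0")
      case True
      then show ?thesis using axis_crossings_nonneg by (simp add: T_def)
    next
      case False
      then have "v = axis_vertex d i (L + Suc n)"
        using axis_event_prob_at_0[OF Suc.prems(1) i] Suc.prems(2) by (simp add: F_def)
      then show ?thesis
        using axis_event_prob_le_axis_crossings_axis_vertex[OF i, of L "L + Suc n" 0]
        by (simp add: F_def T_def)
    qed
  qed (use Suc.prems in simp)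
  then show ?case by (simp add: F_def T_def)
qed

lemma exists_max_coordinate:
  fixes u :: "nat list"
  obtains i where "i \<le> d" "\<forall>j\<le>d. u ! j \<le> u ! i"
proof -
  have "Max ((!) u ` {..d}) \<in> (!) u ` {..d}" by (rule Max_in) auto
  then obtain i where "i \<le> d" "Max ((!) u ` {..d}) = u ! i" by blast
  moreover have "u ! j \<le> Max ((!) u ` {..d})" if "j \<le> d" for j
    using that by (intro Max_ge) auto
  ultimately show ?thesis using that by metis
qed

text \<open>At the time supplied by \<open>poisson_window_time\<close> the largest coordinate has probably kept
  more than \<open>L\<close> units while every other coordinate has probably been exhausted.\<close>

lemma axis_event_prob_ge_at_max_coordinate:
  assumes L: "1 \<le> L" and i: "i \<le> d" and imax: "\<forall>j\<le>d. u ! j \<le> u ! i" and big: "72 * L\<^sup>2 \<le> u ! i"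
  obtains \<theta> where "0 \<le> \<theta>" "(1/4) ^ Suc d \<le> axis_event_prob d i L u \<theta>"
proof -
  have "L \<le> L\<^sup>2" using L by (simp add: power2_eq_square)
  then have Li: "L \<le> u ! i" and window: "36 * L\<^sup>2 \<le> Suc (u ! i - L)" using big by linarith+
  obtain \<theta> where \<theta>: "0 \<le> \<theta>" "1/4 \<le> poisson_cdf (Suc (u ! i - L)) \<theta>"
      "1/4 \<le> 1 - poisson_cdf (u ! i - L + L) \<theta>"
    using poisson_window_time[OF L window] by blast
  have "1/4 \<le> axis_factor i L j (u ! j) \<theta>" if "j \<le> d" for j
  proof (cases "j = i")
    case False
    have "poisson_cdf (u ! j) \<theta> \<le> poisson_cdf (u ! i - L + L) \<theta>"
      using imax that Li \<theta>(1) by (intro poisson_cdf_mono) auto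
    then show ?thesis using False \<theta> by (simp add: axis_factor_def hit_prob_def)
  qed (use \<theta> Li in \<open>simp add: axis_factor_def stay_prob_def\<close>)
  then have "(1/4) ^ Suc d \<le> axis_event_prob d i L u \<theta>"
    unfolding axis_event_prob_def
    using prod_mono[of "{..<Suc d}" "\<lambda>_. 1/4::real" "\<lambda>j. axis_factor i L j (u ! j) \<theta>"] by simp
  with \<theta>(1) show ?thesis by (rule that)
qed

lemma axis_crossings_lower_bound:
  assumes len: "length u = Suc d" and L: "1 \<le> L" and big: "72 * Suc d * L\<^sup>2 \<le> sum_list u"
  shows "real L / 4 ^ Suc d \<le> axis_crossings d L (sum_list u) u"
proof -
  obtain i where i: "i \<le> d" and imax: "\<forall>j\<le>d. u ! j \<le> u ! i"
    by (rule exists_max_coordinate)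
  have "sum_list u = (\<Sum>j<Suc d. u ! j)" using len by (simp add: sum_list_sum_nth atLeast0LessThan)
  also have "\<dots> \<le> Suc d * u ! i" using imax sum_mono[of "{..<Suc d}" "\<lambda>j. u ! j" "\<lambda>_. u ! i"] by simp
  finally have "Suc d * (72 * L\<^sup>2) \<le> Suc d * u ! i" using big by (simp add: algebra_simps)
  then have big_i: "72 * L\<^sup>2 \<le> u ! i" by (simp only: Suc_mult_le_cancel1)
  moreover have "L \<le> L\<^sup>2" using L by (simp add: power2_eq_square)
  ultimately have Li: "L \<le> u ! i" by linarith
  obtain \<theta> where \<theta>: "0 \<le> \<theta>" "(1/4) ^ Suc d \<le> axis_event_prob d i L u \<theta>"
    using axis_event_prob_ge_at_max_coordinate[OF L i imax big_i] by blast
  then have "real L * (1/4) ^ Suc d \<le> real L * axis_event_prob d i L u \<theta>"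
    by (intro mult_left_mono) simp_all
  then have "real L / 4 ^ Suc d \<le> real L * axis_event_prob d i L u \<theta>"
    by (simp add: power_one_over)
  also have "\<dots> \<le> axis_crossings d L (L + (sum_list u - L)) u"
    using Li elem_le_sum_list[of i u] len i \<theta>(1)
    by (intro axis_event_prob_le_axis_crossings[OF L i len]) auto
  finally show ?thesis using Li elem_le_sum_list[of i u] len i by simp
qed

definition noise_coeff :: "nat \<Rightarrow> nat \<Rightarrow> (nat list \<Rightarrow> real) \<Rightarrow> nat list \<times> nat \<Rightarrow> real" where
  "noise_coeff d t c e = (\<Sum>u\<in>layer d t. c u * crossing_prob t u e)"

lemma sum_noise_coeff_axis_edges_ge:
  assumes L: "1 \<le> L" and big: "72 * Suc d * L\<^sup>2 \<le> t" and c: "\<forall>u\<in>layer d t. 0 \<le> c u"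
  shows "(\<Sum>u\<in>layer d t. c u) * real L / 4 ^ Suc d \<le> (\<Sum>e\<in>axis_edges d L. noise_coeff d t c e)"
proof -
  have "(\<Sum>u\<in>layer d t. c u) * real L / 4 ^ Suc d = (\<Sum>u\<in>layer d t. c u * (real L / 4 ^ Suc d))"
    by (simp add: sum_distrib_right sum_divide_distrib)
  also have "\<dots> \<le> (\<Sum>u\<in>layer d t. c u * axis_crossings d L t u)"
    using c big axis_crossings_lower_bound[OF _ L] by (intro sum_mono mult_left_mono) (auto simp: layer_def)
  also have "\<dots> = (\<Sum>e\<in>axis_edges d L. noise_coeff d t c e)"
    by (simp add: noise_coeff_def axis_crossings_def sum_distrib_left sum.swap[of _ "axis_edges d L"])
  finally show ?thesis .
qed

lemma sum_noise_coeff_sq_ge: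
  assumes L: "1 \<le> L" and big: "72 * Suc d * L\<^sup>2 \<le> t" and c: "\<forall>u\<in>layer d t. 0 \<le> c u"
  shows "(\<Sum>u\<in>layer d t. c u)\<^sup>2 * real L
    \<le> (4 ^ Suc d)\<^sup>2 * real (Suc d) * (\<Sum>e\<in>edges_upto d t. (noise_coeff d t c e)\<^sup>2)"
proof -
  define S where "S = (\<Sum>u\<in>layer d t. c u)"
  define N where "N = (\<Sum>e\<in>edges_upto d t. (noise_coeff d t c e)\<^sup>2)"
  have "L * 1 \<le> L * (72 * Suc d * L)" using L by (intro mult_le_mono2) simp
  then have "L \<le> t" using big by (simp add: power2_eq_square algebra_simps)
  then have sub: "axis_edges d L \<subseteq> edges_upto d t" by (rule axis_edges_subset_edges_upto)
  have "0 \<le> S" using c by (simp add: S_def sum_nonneg)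
  then have "(S * L / 4 ^ Suc d)\<^sup>2 \<le> (\<Sum>e\<in>axis_edges d L. noise_coeff d t c e)\<^sup>2"
    using sum_noise_coeff_axis_edges_ge[OF L big c] by (intro power_mono) (auto simp: S_def)
  also have "\<dots> \<le> (\<Sum>e\<in>axis_edges d L. (noise_coeff d t c e)\<^sup>2) * card (axis_edges d L)"
    by (rule sum_squared_le_sum_of_squares)
  also have "\<dots> \<le> N * (Suc d * L)"
    using sub card_axis_edges_le[of d L] unfolding N_def
    by (intro mult_mono sum_mono2 sum_nonneg) (auto simp flip: of_nat_mult)
  finally have "(S * L)\<^sup>2 \<le> (4 ^ Suc d)\<^sup>2 * (N * (Suc d * L))"
    by (simp add: power_divide field_simps)
  then have "real L * (S\<^sup>2 * L) \<le> real L * ((4 ^ Suc d)\<^sup>2 * real (Suc d) * N)"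
    by (simp add: power2_eq_square algebra_simps)
  then show ?thesis using L by (simp add: S_def N_def)
qed

lemma layer_sum_eq_linear_combination:
  "(\<Sum>u\<in>layer d t. c u * broadcastX G u \<omega>)
    = (\<Sum>j\<in>insert None (Some ` edges_upto d t). case_option (\<Sum>u\<in>layer d t. c u) (noise_coeff d t c) j * G j \<omega>)"
proof -
  have "broadcastX G u \<omega> = G None \<omega> + (\<Sum>e\<in>edges_upto d t. crossing_prob t u e * G (Some e) \<omega>)"
    if "u \<in> layer d t" for u
    using that bX_eq_linear_combination[of "edges_upto d t" d t u G \<omega>]
    by (simp add: broadcastX_def layer_def)
  then have "(\<Sum>u\<in>layer d t. c u * broadcastX G u \<omega>) = (\<Sum>u\<in>layer d t. c u) * G None \<omega>
      + (\<Sum>e\<in>edges_upto d t. noise_coeff d t c e * G (Some e) \<omega>)"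
    by (simp add: noise_coeff_def distrib_left sum.distrib sum_distrib_left sum_distrib_right
        sum.swap[of _ "edges_upto d t"] mult.assoc)
  then show ?thesis by (simp add: sum.reindex)
qed

definition energy_const :: "nat \<Rightarrow> real" where
  "energy_const d = 2 * (4 ^ Suc d)\<^sup>2 * real (Suc d) * sqrt (72 * real (Suc d))"

lemma noise_energy_lower_bound:
  assumes t: "1 \<le> t" and c: "\<forall>u\<in>layer d t. 0 \<le> c u"
  defines "S \<equiv> \<Sum>u\<in>layer d t. c u"
    and "N \<equiv> \<Sum>e\<in>edges_upto d t. (noise_coeff d t c e)\<^sup>2"
  shows "S\<^sup>2 * sqrt t \<le> energy_const d * (S\<^sup>2 + N)"
proof -
  define r where "r = sqrt (72 * real (Suc d))"
  have "0 \<le> N" by (simp add: N_def sum_nonneg)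
  have "1 \<le> r" by (simp add: r_def)
  show ?thesis
  proof (cases "t < 72 * Suc d")
    case True
    have "(1::real) \<le> (4 ^ Suc d)\<^sup>2" by (intro one_le_power) simp_all
    then have "1 \<le> 2 * (4 ^ Suc d)\<^sup>2 * real (Suc d)"
      using mult_mono[of 1 "(4 ^ Suc d)\<^sup>2" 1 "real (Suc d)"] by simp
    then have "1 * r \<le> 2 * (4 ^ Suc d)\<^sup>2 * real (Suc d) * r"
      using \<open>1 \<le> r\<close> by (intro mult_right_mono) auto
    moreover have "sqrt t \<le> r" using True by (simp add: r_def)
    ultimately have "sqrt t \<le> 2 * (4 ^ Suc d)\<^sup>2 * real (Suc d) * r" by simp
    then have "S\<^sup>2 * sqrt t \<le> S\<^sup>2 * (2 * (4 ^ Suc d)\<^sup>2 * real (Suc d) * r)"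
      by (intro mult_left_mono) auto
    also have "\<dots> \<le> 2 * (4 ^ Suc d)\<^sup>2 * real (Suc d) * r * (S\<^sup>2 + N)"
      using \<open>0 \<le> N\<close> \<open>1 \<le> r\<close> by (simp add: algebra_simps)
    finally show ?thesis by (simp add: energy_const_def r_def)
  next
    case False
    define L where "L = nat \<lfloor>sqrt t / r\<rfloor>"
    have "1 \<le> sqrt t / r" using False by (simp add: r_def real_le_rsqrt)
    then have L: "1 \<le> L" "real L \<le> sqrt t / r" "sqrt t / r < real L + 1"
      unfolding L_def by linarith+
    have "sqrt t < r * real L + r" using L(3) \<open>1 \<le> r\<close> by (simp add: field_simps)
    moreover have "r \<le> r * real L" using L(1) \<open>1 \<le> r\<close> mult_left_mono[of 1 "real L" r] by simp
    ultimately have "sqrt t \<le> 2 * real L * r" by (simp add: algebra_simps)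
    have "real L * r \<le> sqrt t" using L(2) \<open>1 \<le> r\<close> by (simp add: field_simps)
    then have "(real L * r)\<^sup>2 \<le> (sqrt t)\<^sup>2" by (rule power_mono) (use \<open>1 \<le> r\<close> in simp)
    then have "(real L * r)\<^sup>2 \<le> real t" by simp
    then have "real (72 * Suc d * L\<^sup>2) \<le> real t" by (simp add: r_def power_mult_distrib algebra_simps)
    then have "72 * Suc d * L\<^sup>2 \<le> t" by (simp only: of_nat_le_iff)
    from sum_noise_coeff_sq_ge[OF L(1) this c]
    have energy: "S\<^sup>2 * real L \<le> (4 ^ Suc d)\<^sup>2 * real (Suc d) * N" by (simp add: S_def N_def)
    have "S\<^sup>2 * sqrt t \<le> S\<^sup>2 * (2 * real L * r)"
      using \<open>sqrt t \<le> 2 * real L * r\<close> by (intro mult_left_mono) auto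
    also have "\<dots> = 2 * r * (S\<^sup>2 * real L)" by simp
    also have "\<dots> \<le> 2 * r * ((4 ^ Suc d)\<^sup>2 * real (Suc d) * N)"
      using energy \<open>1 \<le> r\<close> by (intro mult_left_mono) auto
    also have "\<dots> \<le> 2 * r * ((4 ^ Suc d)\<^sup>2 * real (Suc d) * (S\<^sup>2 + N))"
      using \<open>1 \<le> r\<close> by (intro mult_left_mono) auto
    finally show ?thesis by (simp add: energy_const_def r_def ac_simps)
  qed
qed

lemma ratio_le_of_sq_bound:
  fixes S N C t :: real
  assumes S: "0 < S" and N: "0 \<le> N" and t: "0 < t" and bound: "S\<^sup>2 * sqrt t \<le> C * (S\<^sup>2 + N)"
  shows "S / sqrt (S\<^sup>2 + N) \<le> sqrt C / t powr (1/4)"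
proof -
  have "(t powr (1/4))\<^sup>2 = t powr (1/2)" by (simp add: power2_eq_square flip: powr_add)
  also have "\<dots> = sqrt t" using t by (simp add: powr_half_sqrt)
  finally have t4: "(t powr (1/4))\<^sup>2 = sqrt t" .
  have "0 < S\<^sup>2 + N" "0 < S\<^sup>2 * sqrt t" using S N t by (simp_all add: add_pos_nonneg)
  then have "0 < C" using bound by (smt (verit) mult_nonpos_nonneg)
  then have "(S * t powr (1/4))\<^sup>2 \<le> (sqrt C * sqrt (S\<^sup>2 + N))\<^sup>2"
    using bound N by (simp add: power_mult_distrib t4)
  then have "S * t powr (1/4) \<le> sqrt C * sqrt (S\<^sup>2 + N)"
    by (rule power2_le_imp_le) (use \<open>0 < C\<close> N in simp)
  then show ?thesis
    using \<open>0 < S\<^sup>2 + N\<close> t by (simp add: field_simps)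
qed

lemma (in prob_space) broadcast_correlation_le:
  assumes ind: "indep_vars (\<lambda>_. borel) G (insert None (Some ` cover_edges d))"
    and nd: "\<forall>j\<in>insert None (Some ` cover_edges d). distributed M lborel (G j) std_normal_density"
    and t: "1 \<le> t" and c: "\<forall>u\<in>layer d t. 0 \<le> c u" and S: "0 < (\<Sum>u\<in>layer d t. c u)"
  defines "\<zeta> \<equiv> \<lambda>\<omega>. \<Sum>u\<in>layer d t. c u * broadcastX G u \<omega>"
  shows "covariance M \<zeta> (G None) / sqrt (var M \<zeta>) \<le> sqrt (energy_const d) / real t powr (1/4)"
proof -
  define J where "J = insert None (Some ` edges_upto d t)"
  define b where "b = case_option (\<Sum>u\<in>layer d t. c u) (noise_coeff d t c)"
  have "J \<subseteq> insert None (Some ` cover_edges d)" by (auto simp: J_def edges_upto_def)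
  note gauss = covariance_var_std_normal_sum[OF ind nd _ this, of None b]
  have "\<zeta> = (\<lambda>\<omega>. \<Sum>j\<in>J. b j * G j \<omega>)"
    by (simp add: \<zeta>_def layer_sum_eq_linear_combination J_def b_def)
  moreover have "(\<Sum>j\<in>J. (b j)\<^sup>2)
      = (\<Sum>u\<in>layer d t. c u)\<^sup>2 + (\<Sum>e\<in>edges_upto d t. (noise_coeff d t c e)\<^sup>2)"
    by (simp add: J_def b_def sum.reindex)
  ultimately show ?thesis
    using gauss noise_energy_lower_bound[OF t c] S t
    by (simp add: J_def b_def ratio_le_of_sq_bound sum_nonneg)
qed

theorem mainTheorem3:
  fixes d :: nat
  shows "\<exists>K>0. \<forall>(M :: 'a measure) G (t :: nat) (c :: nat list \<Rightarrow> real).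
    prob_space M \<longrightarrow>
    prob_space.indep_vars M (\<lambda>_. borel) G (insert None (Some ` cover_edges d)) \<longrightarrow>
    (\<forall>j\<in>insert None (Some ` cover_edges d). distributed M lborel (G j) std_normal_density) \<longrightarrow>
    1 \<le> t \<longrightarrow>
    (\<forall>u\<in>layer d t. 0 \<le> c u) \<longrightarrow>
    0 < (\<Sum>u\<in>layer d t. c u) \<longrightarrow>
    (let \<zeta> = (\<lambda>\<omega>. \<Sum>u\<in>layer d t. c u * broadcastX G u \<omega>)
     in covariance M \<zeta> (G None) / sqrt (var M \<zeta>) \<le> K / real t powr (1/4))"
proof (intro exI[of _ "sqrt (energy_const d)"] conjI allI impI)
  show "0 < sqrt (energy_const d)" by (simp add: energy_const_def)
qed (simp add: Let_def prob_space.broadcast_correlation_le)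

end
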